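(* Let $q\in[1,2]$ and let $R:\mathbb{R}\to\mathbb{R}$ be a $C^2$ Legendre function that is inversely $\mu$-coercive for some $\mu>0$. Then there exists an invertible reparameterization $g:\mathbb{R}\to\mathbb{R}$ such that, for every differentiable $f:\mathbb{R}\to\mathbb{R}$, if $x_t$ solves the one-dimensional steepest mirror flow $d\,R'(x_t)=-\operatorname{sign}(f'(x_t))|f'(x_t)|^{q-1}dt$, then $w_t:=g^{-1}(x_t)$ solves the steepest flow $dw_t=-\operatorname{sign}\left(\tfrac{d}{dw}f(g(w_t))\right)\left|\tfrac{d}{dw}f(g(w_t))\right|^{q-1}dt$; in particular $x_t=g(w_t)$.
   Context: Legendre function: differentiable convex $R$, strictly convex on the interior of its domain, with $|R'(x_i)|\to\infty$ along sequences tending to the boundary of its domain. In one dimension, inverse $\mu$-coercivity means $x\,(R''(x))^{-1}x\ge\mu x^2$ for all $x$. *)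

theory Defs
  imports "HOL-Analysis.Analysis"
begin

definition strictly_convex_on :: "real set \<Rightarrow> (real \<Rightarrow> real) \<Rightarrow> bool" where
  "strictly_convex_on S R \<longleftrightarrow> convex S \<and>
     (\<forall>x\<in>S. \<forall>y\<in>S. x \<noteq> y \<longrightarrow> (\<forall>u::real. 0 < u \<and> u < 1 \<longrightarrow>
        R (u * x + (1 - u) * y) < u * R x + (1 - u) * R y))"

definition C2_real :: "(real \<Rightarrow> real) \<Rightarrow> bool" where
  "C2_real R \<longleftrightarrow> (\<forall>x. R differentiable (at x)) \<and> (\<forall>x. deriv R differentiable (at x))
     \<and> continuous_on UNIV (deriv (deriv R))"

text \<open>Legendre function with domain the whole real line: differentiable, convex,
  strictly convex on the interior of the domain (= UNIV), and |R'| blows up along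
  sequences tending to the boundary of the domain, here read as +/- infinity.\<close>
definition legendre_real :: "(real \<Rightarrow> real) \<Rightarrow> bool" where
  "legendre_real R \<longleftrightarrow> (\<forall>x. R differentiable (at x)) \<and> convex_on UNIV R
     \<and> strictly_convex_on (interior UNIV) R
     \<and> filterlim (\<lambda>x. \<bar>deriv R x\<bar>) at_top at_infinity"

definition inv_coercive :: "real \<Rightarrow> (real \<Rightarrow> real) \<Rightarrow> bool" where
  "inv_coercive \<mu> R \<longleftrightarrow> (\<forall>x v. v * inverse (deriv (deriv R) x) * v \<ge> \<mu> * v\<^sup>2)"

definition mirror_flow_sol :: "real \<Rightarrow> (real \<Rightarrow> real) \<Rightarrow> (real \<Rightarrow> real) \<Rightarrow> (real \<Rightarrow> real) \<Rightarrow> bool" where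
  "mirror_flow_sol q R f x \<longleftrightarrow> (\<forall>t\<ge>0.
     ((\<lambda>s. deriv R (x s)) has_real_derivative
        (- sgn (deriv f (x t)) * \<bar>deriv f (x t)\<bar> powr (q - 1))) (at t within {0..}))"

definition steepest_flow_sol :: "real \<Rightarrow> (real \<Rightarrow> real) \<Rightarrow> (real \<Rightarrow> real) \<Rightarrow> bool" where
  "steepest_flow_sol q h w \<longleftrightarrow> (\<forall>t\<ge>0.
     (w has_real_derivative
        (- sgn (deriv h (w t)) * \<bar>deriv h (w t)\<bar> powr (q - 1))) (at t within {0..}))"

end

theory Submission
  imports Defs "HOL-Complex_Analysis.Conformal_Mappings"
begin

(* Take h with h' = (R'')^(1/q) and g = h^(-1). Along a mirror flow the chain rule gives
   d/dt h(x_t) = h'(x_t) / R''(x_t) * (-sgn f'(x_t) |f'(x_t)|^(q-1)), while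
   (f o g)'(h(x_t)) = f'(x_t) / h'(x_t); since h'^q = R'', the factor h'/R'' equals h'^(1-q),
   which is exactly what turns the first expression into the steepest flow of f o g.
   Inverse mu-coercivity means 0 < R'' <= 1/mu, so for q >= 1 we get h' >= mu^(1-1/q) R'';
   hence h - mu^(1-1/q) R' is monotone and h is unbounded in both directions like R', which
   is unbounded by the Legendre property. So h is a bijection. *)

lemma strict_mono_if_DERIV_pos:
  fixes P :: "real \<Rightarrow> real"
  assumes "\<And>z. DERIV P z :> P' z" and "\<And>z. P' z > 0"
  shows "strict_mono P"
  unfolding strict_mono_def by (metis DERIV_pos_imp_increasing assms)

lemma mono_if_DERIV_nonneg:
  fixes P :: "real \<Rightarrow> real"
  assumes "\<And>z. DERIV P z :> P' z" and "\<And>z. P' z \<ge> 0"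
  shows "mono P"
  unfolding mono_def by (metis deriv_nonneg_imp_mono assms)

lemma DERIV_inv_if_DERIV_pos:
  fixes P :: "real \<Rightarrow> real"
  assumes dP: "\<And>z. DERIV P z :> P' z" and pos: "\<And>z. P' z > 0"
  shows "DERIV (inv P) (P z) :> inverse (P' z)"
proof -
  have "continuous_on UNIV P"
    using dP DERIV_isCont continuous_at_imp_continuous_on by blast
  moreover have "inv P (P y) = y" for y
    using strict_mono_if_DERIV_pos[OF dP pos] by (simp add: strict_mono_imp_inj_on)
  ultimately show ?thesis
    using has_field_derivative_inverse_strong[where f=P and x=z and S=UNIV and g="inv P"] dP pos[of z] by auto
qed

lemma has_real_derivative_through_inverse:
  fixes P h :: "real \<Rightarrow> real"
  assumes dP: "\<And>z. DERIV P z :> P' z" and pos: "\<And>z. P' z > 0"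
    and dh: "\<And>z. DERIV h z :> h' z"
    and dPx: "((\<lambda>s. P (x s)) has_real_derivative E) (at t within S)"
  shows "((\<lambda>s. h (x s)) has_real_derivative h' (x t) / P' (x t) * E) (at t within S)"
proof -
  have "inv P (P y) = y" for y
    using strict_mono_if_DERIV_pos[OF dP pos] by (simp add: strict_mono_imp_inj_on)
  moreover have "((\<lambda>s. h (inv P (P (x s)))) has_real_derivative
      h' (inv P (P (x t))) * (inverse (P' (x t)) * E)) (at t within S)"
    by (rule DERIV_chain2[OF dh DERIV_chain2[OF DERIV_inv_if_DERIV_pos[OF dP pos] dPx]])
  ultimately show ?thesis by (simp add: field_simps)
qed

lemma surj_if_continuous_unbounded:
  fixes f :: "real \<Rightarrow> real"
  assumes "continuous_on UNIV f" and "\<And>M. (\<exists>z. M \<le> f z) \<and> (\<exists>z. f z \<le> M)"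
  shows "surj f"
proof (rule surjI[of _ "\<lambda>y. SOME z. f z = y"], rule someI_ex)
  fix y
  obtain a b where "f a \<le> y" "y \<le> f b" using assms(2) by blast
  then show "\<exists>z. f z = y"
    using IVT'[of f a y b] IVT2'[of f a y b] continuous_on_subset[OF assms(1)]
    by (cases "a \<le> b") auto
qed

lemma mono_unbounded_if_abs_filterlim:
  fixes f :: "real \<Rightarrow> real"
  assumes "mono f" and "filterlim (\<lambda>x. \<bar>f x\<bar>) at_top at_infinity"
  shows "(\<exists>z. M \<le> f z) \<and> (\<exists>z. f z \<le> M)"
proof -
  obtain b where b: "\<And>x::real. norm x \<ge> b \<Longrightarrow> \<bar>f x\<bar> \<ge> \<bar>M\<bar> + \<bar>f 0\<bar> + 1"
    using assms(2) unfolding filterlim_at_top eventually_at_infinity by blast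
  define z where "z = max b 0"
  have "f 0 \<le> f z" "f (- z) \<le> f 0"
    using \<open>mono f\<close> by (auto simp: z_def mono_def)
  moreover have "norm z \<ge> b" "norm (- z) \<ge> b"
    by (auto simp: z_def)
  ultimately have "M \<le> f z" "f (- z) \<le> M"
    using b[of z] b[of "- z"] by linarith+
  then show ?thesis by blast
qed

lemma unbounded_if_dominates:
  fixes h P :: "real \<Rightarrow> real"
  assumes "mono (\<lambda>z. h z - c * P z)" and "c > 0" and "mono P"
    and "\<And>M. (\<exists>z. M \<le> P z) \<and> (\<exists>z. P z \<le> M)"
  shows "(\<exists>z. M \<le> h z) \<and> (\<exists>z. h z \<le> M)"
proof -
  obtain a b where a: "P 0 + (M - h 0) / c \<le> P a" and b: "P b \<le> P 0 + (M - h 0) / c"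
    using assms(4) by blast
  define z where "z = max a 0"
  have "h 0 - c * P 0 \<le> h z - c * P z" "P a \<le> P z"
    using assms(1,3) by (auto simp: z_def mono_def)
  moreover have "M - h 0 \<le> c * (P a - P 0)"
    using a \<open>c > 0\<close> by (simp add: field_simps)
  moreover have "c * P a \<le> c * P z"
    using \<open>P a \<le> P z\<close> \<open>c > 0\<close> by simp
  ultimately have "M \<le> h z"
    by (simp add: algebra_simps)
  define w where "w = min b 0"
  have "h w - c * P w \<le> h 0 - c * P 0" "P w \<le> P b"
    using assms(1,3) by (auto simp: w_def mono_def)
  moreover have "c * (P b - P 0) \<le> M - h 0"
    using b \<open>c > 0\<close> by (simp add: field_simps)
  moreover have "c * P w \<le> c * P b"
    using \<open>P w \<le> P b\<close> \<open>c > 0\<close> by simp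
  ultimately have "h w \<le> M"
    by (simp add: algebra_simps)
  with \<open>M \<le> h z\<close> show ?thesis by blast
qed

lemma inv_coercive_deriv2_bounds:
  assumes "inv_coercive \<mu> R" and "\<mu> > 0"
  shows "0 < deriv (deriv R) x" and "deriv (deriv R) x \<le> 1 / \<mu>"
proof -
  have ge: "\<mu> \<le> inverse (deriv (deriv R) x)"
    using assms(1) unfolding inv_coercive_def by (metis mult_1 mult_1_right power_one)
  with assms(2) show pos: "0 < deriv (deriv R) x"
    by (metis inverse_nonpositive_iff_nonpositive not_le order_less_le_trans)
  from ge pos assms(2) show "deriv (deriv R) x \<le> 1 / \<mu>"
    by (simp add: field_simps)
qed

lemma C2_real_DERIV_deriv:
  assumes "C2_real R"
  shows "DERIV (deriv R) x :> deriv (deriv R) x"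
  using assms DERIV_deriv_iff_real_differentiable unfolding C2_real_def by blast

lemma scaled_le_powr_inverse:
  fixes r \<mu> q :: real
  assumes "0 < r" and "r \<le> 1 / \<mu>" and "1 \<le> q"
  shows "\<mu> powr (1 - 1 / q) * r \<le> r powr (1 / q)"
proof -
  have "\<mu> > 0" using assms(1,2) by (metis order_less_le_trans zero_less_divide_1_iff)
  then have "\<mu> powr (1 - 1 / q) = (1 / \<mu>) powr (1 / q - 1)"
    by (simp add: powr_divide powr_minus_divide[symmetric] powr_minus)
  also have "\<dots> \<le> r powr (1 / q - 1)"
    by (rule powr_mono2') (use assms in \<open>auto simp: field_simps\<close>)
  finally have "\<mu> powr (1 - 1 / q) * r \<le> r powr (1 / q - 1) * r powr 1"
    using assms(1) by (simp add: mult_right_mono)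
  also have "\<dots> = r powr (1 / q)"
    by (metis powr_add diff_add_cancel)
  finally show ?thesis .
qed

lemma sgn_mult_abs_powr_divide:
  fixes a c p :: real
  assumes "c > 0"
  shows "sgn (a / c) * \<bar>a / c\<bar> powr p = c powr (- p) * (sgn a * \<bar>a\<bar> powr p)"
  using assms by (simp add: sgn_mult abs_mult powr_divide powr_minus field_simps)

lemma legendre_reparametrization_exists:
  fixes q \<mu> :: real and R :: "real \<Rightarrow> real"
  assumes "C2_real R" and "legendre_real R" and "\<mu> > 0" and "inv_coercive \<mu> R" and "1 \<le> q"
  shows "\<exists>h. bij h \<and> (\<forall>z. DERIV h z :> deriv (deriv R) z powr (1 / q))"
proof -
  define R'' where "R'' = deriv (deriv R)"
  have dR': "DERIV (deriv R) z :> R'' z" for z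
    using C2_real_DERIV_deriv[OF assms(1)] by (simp add: R''_def)
  have pos: "0 < R'' z" and le: "R'' z \<le> 1 / \<mu>" for z
    using inv_coercive_deriv2_bounds[OF assms(4,3)] by (simp_all add: R''_def)
  have "continuous_on UNIV R''"
    using assms(1) unfolding C2_real_def R''_def by blast
  then have "continuous_on UNIV (\<lambda>z. R'' z powr (1 / q))"
    using pos by (intro continuous_on_powr continuous_on_const) (auto simp: less_imp_not_eq2)
  then have "\<exists>h. \<forall>z::real. -\<infinity> < z \<longrightarrow> z < \<infinity> \<longrightarrow>
      (h has_vector_derivative R'' z powr (1 / q)) (at z)"
    by (intro einterval_antiderivative) (simp_all add: continuous_on_eq_continuous_at)
  then obtain h where dh: "\<And>z. DERIV h z :> R'' z powr (1 / q)"
    by (auto simp: has_real_derivative_iff_has_vector_derivative)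
  have hpos: "0 < R'' z powr (1 / q)" for z
    using pos[of z] by simp
  define c where "c = \<mu> powr (1 - 1 / q)"
  have "c * R'' z \<le> R'' z powr (1 / q)" for z
    unfolding c_def using pos le assms(5) by (rule scaled_le_powr_inverse)
  then have "mono (\<lambda>z. h z - c * deriv R z)"
    by (intro mono_if_DERIV_nonneg[where P' = "\<lambda>z. R'' z powr (1 / q) - c * R'' z"]
        DERIV_diff DERIV_cmult dh dR') simp
  moreover have "c > 0"
    using assms(3) by (simp add: c_def)
  moreover have "mono (deriv R)"
    using strict_mono_if_DERIV_pos[OF dR' pos] by (rule strict_mono_mono)
  moreover have "(\<exists>z. M \<le> deriv R z) \<and> (\<exists>z. deriv R z \<le> M)" for M
    using mono_unbounded_if_abs_filterlim[OF \<open>mono (deriv R)\<close>] assms(2)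
    unfolding legendre_real_def by blast
  ultimately have unbounded: "(\<exists>z. M \<le> h z) \<and> (\<exists>z. h z \<le> M)" for M
    by (rule unbounded_if_dominates)
  have "continuous_on UNIV h"
    using dh DERIV_isCont continuous_at_imp_continuous_on by blast
  then have "surj h"
    using unbounded by (rule surj_if_continuous_unbounded)
  moreover have "inj h"
    using strict_mono_if_DERIV_pos[OF dh hpos] by (rule strict_mono_imp_inj_on)
  ultimately show ?thesis
    using dh unfolding R''_def bij_def by blast
qed

lemma steepest_flow_sol_of_mirror_flow_sol:
  fixes q :: real and R R'' h f x :: "real \<Rightarrow> real"
  assumes "q > 0"
    and dR': "\<And>z. DERIV (deriv R) z :> R'' z" and pos: "\<And>z. R'' z > 0"
    and dh: "\<And>z. DERIV h z :> R'' z powr (1 / q)"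
    and df: "\<And>y. f differentiable (at y)"
    and mirror: "mirror_flow_sol q R f x"
  shows "steepest_flow_sol q (f \<circ> inv h) (\<lambda>t. h (x t))"
  unfolding steepest_flow_sol_def
proof (intro allI impI)
  fix t :: real
  assume "0 \<le> t"
  have hpos: "0 < R'' z powr (1 / q)" for z
    using pos[of z] by simp
  define a where "a = deriv f (x t)"
  define \<phi> where "\<phi> = R'' (x t) powr (1 / q)"
  have "\<phi> > 0"
    using pos[of "x t"] by (simp add: \<phi>_def)
  have "((\<lambda>s. deriv R (x s)) has_real_derivative - sgn a * \<bar>a\<bar> powr (q - 1)) (at t within {0..})"
    using mirror \<open>0 \<le> t\<close> unfolding mirror_flow_sol_def a_def by blast
  then have dhx: "((\<lambda>s. h (x s)) has_real_derivative \<phi> / R'' (x t) * (- sgn a * \<bar>a\<bar> powr (q - 1)))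
      (at t within {0..})"
    unfolding \<phi>_def by (rule has_real_derivative_through_inverse[OF dR' pos dh])
  have "\<phi> powr q = R'' (x t)"
    using pos[of "x t"] \<open>q > 0\<close> by (simp add: \<phi>_def powr_powr)
  then have rescale: "\<phi> / R'' (x t) = \<phi> powr (- (q - 1))"
    using powr_diff[of \<phi> 1 q] \<open>\<phi> > 0\<close> by simp
  have deriv_fg: "deriv (f \<circ> inv h) (h (x t)) = a / \<phi>"
  proof (rule DERIV_imp_deriv)
    have "inv h (h (x t)) = x t"
      using strict_mono_if_DERIV_pos[OF dh hpos] by (simp add: strict_mono_imp_inj_on)
    then have "DERIV f (inv h (h (x t))) :> a"
      using df DERIV_deriv_iff_real_differentiable by (simp add: a_def)
    from DERIV_chain[OF this DERIV_inv_if_DERIV_pos[OF dh hpos]]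
    show "DERIV (f \<circ> inv h) (h (x t)) :> a / \<phi>"
      using pos by (simp add: \<phi>_def divide_inverse)
  qed
  have factor: "\<phi> / R'' (x t) * (- sgn a * \<bar>a\<bar> powr (q - 1)) = - sgn (a / \<phi>) * \<bar>a / \<phi>\<bar> powr (q - 1)"
    unfolding rescale mult_minus_left sgn_mult_abs_powr_divide[OF \<open>\<phi> > 0\<close>] by simp
  show "((\<lambda>t. h (x t)) has_real_derivative
      - sgn (deriv (f \<circ> inv h) (h (x t))) * \<bar>deriv (f \<circ> inv h) (h (x t))\<bar> powr (q - 1))
      (at t within {0..})"
    unfolding deriv_fg factor[symmetric] by (fact dhx)
qed

theorem theorem14:
  fixes q \<mu> :: real and R :: "real \<Rightarrow> real"
  assumes "1 \<le> q" and "q \<le> 2"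
    and "C2_real R" and "legendre_real R"
    and "\<mu> > 0" and "inv_coercive \<mu> R"
  shows "\<exists>g :: real \<Rightarrow> real. bij g \<and> (\<forall>w. g differentiable (at w)) \<and>
           (\<forall>f :: real \<Rightarrow> real. (\<forall>y. f differentiable (at y)) \<longrightarrow>
             (\<forall>x :: real \<Rightarrow> real. mirror_flow_sol q R f x \<longrightarrow>
                steepest_flow_sol q (f \<circ> g) (\<lambda>t. inv g (x t)) \<and>
                (\<forall>t\<ge>0. x t = g (inv g (x t)))))"
proof -
  obtain h where "bij h" and dh: "\<And>z. DERIV h z :> deriv (deriv R) z powr (1 / q)"
    using legendre_reparametrization_exists[OF assms(3,4,5,6,1)] by blast
  have pos: "0 < deriv (deriv R) z" for z
    using inv_coercive_deriv2_bounds(1)[OF assms(6,5)] .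
  have hpos: "0 < deriv (deriv R) z powr (1 / q)" for z
    using pos[of z] by simp
  show ?thesis
  proof (intro exI[of _ "inv h"] conjI allI impI)
    show "bij (inv h)"
      using \<open>bij h\<close> by (rule bij_imp_bij_inv)
    show "inv h differentiable (at w)" for w
      using DERIV_inv_if_DERIV_pos[OF dh hpos, of "inv h w"] \<open>bij h\<close>
      by (metis bij_is_surj real_differentiable_def surj_f_inv_f)
    show "x t = inv h (inv (inv h) (x t))" for x :: "real \<Rightarrow> real" and t
      using \<open>bij h\<close> by (simp add: inv_inv_eq bij_is_inj)
    show "steepest_flow_sol q (f \<circ> inv h) (\<lambda>t. inv (inv h) (x t))"
      if "\<forall>y. f differentiable (at y)" and "mirror_flow_sol q R f x" for f x
      using steepest_flow_sol_of_mirror_flow_sol[OF _ C2_real_DERIV_deriv[OF assms(3)] pos dh]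
        that assms(1) \<open>bij h\<close> by (simp add: inv_inv_eq)
  qed
qed

end
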